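(* For an arbitrary finite undirected graph $G$, the neighborhood complex $\mathcal N(G)$ and the polyhedral complex $\mathrm{Hom}(K_2,G)$ have the same simple homotopy type.
   Context: For $S\subseteq V(G)$, $N(S)$ denotes the set of common neighbors of all vertices in $S$. The neighborhood complex $\mathcal N(G)$ is the simplicial complex whose vertices are the non-isolated vertices of $G$ and whose simplices are the nonempty subsets $S\subseteq V(G)$ with $N(S)\neq\emptyset$. $\Delta^{V(G)}$ is the simplex with vertex set $V(G)$, whose faces are identified with nonempty subsets of $V(G)$. $\mathrm{Hom}(K_2,G)$ is the polyhedral subcomplex of $\Delta^{V(G)}\times\Delta^{V(G)}$ consisting of all cells $\sigma\times\tau$ ($\sigma,\tau\subseteq V(G)$ nonempty) such that $(x,y)\in E(G)$ for all $x\in\sigma,y\in\tau$ (i.e. $(\sigma,\tau)$ is a complete bipartite subgraph of $G$). Two complexes have the same simple homotopy type if they are connected by a finite sequence of elementary collapses and elementary expansions. *)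

theory Defs
  imports "HOL-Analysis.Analysis" "HOL-Library.Function_Algebras"
begin

text \<open>We use the ambient space of functions from an index type to real, so that
  finite polyhedral complexes of arbitrary dimension can be placed in it.\<close>

instantiation "fun" :: (type, real_vector) real_vector
begin
definition scaleR_fun :: "real \<Rightarrow> ('a \<Rightarrow> 'b) \<Rightarrow> 'a \<Rightarrow> 'b" where
  "scaleR_fun r f = (\<lambda>x. r *\<^sub>R f x)"
instance
  by standard (auto simp: scaleR_fun_def fun_eq_iff scaleR_add_right scaleR_add_left)
end

definition affine_rank :: "'a::real_vector set \<Rightarrow> nat" where
  "affine_rank P = (GREATEST n. \<exists>S. S \<subseteq> P \<and> finite S \<and> \<not> affine_dependent S \<and> card S = n)"

definition cell_dim :: "'a::real_vector set \<Rightarrow> int" where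
  "cell_dim P = int (affine_rank P) - 1"

definition polyhedral_complex :: "'a::real_vector set set \<Rightarrow> bool" where
  "polyhedral_complex K \<longleftrightarrow>
     finite K \<and>
     (\<forall>P\<in>K. polytope P \<and> P \<noteq> {}) \<and>
     (\<forall>P\<in>K. \<forall>F. F face_of P \<and> F \<noteq> {} \<longrightarrow> F \<in> K) \<and>
     (\<forall>P\<in>K. \<forall>Q\<in>K. P \<inter> Q = {} \<or> (P \<inter> Q face_of P \<and> P \<inter> Q face_of Q))"

definition elementary_collapse :: "'a::real_vector set set \<Rightarrow> 'a set set \<Rightarrow> bool" where
  "elementary_collapse K L \<longleftrightarrow>
     polyhedral_complex K \<and>
     (\<exists>\<sigma> \<tau>. \<sigma> \<in> K \<and> \<tau> \<in> K \<and> \<sigma> \<subset> \<tau> \<and> cell_dim \<sigma> = cell_dim \<tau> - 1 \<and>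
        (\<forall>\<rho>\<in>K. \<sigma> \<subseteq> \<rho> \<longrightarrow> \<rho> = \<sigma> \<or> \<rho> = \<tau>) \<and>
        L = K - {\<sigma>, \<tau>})"

definition same_simple_homotopy_type :: "'a::real_vector set set \<Rightarrow> 'a set set \<Rightarrow> bool" where
  "same_simple_homotopy_type K L \<longleftrightarrow>
     (\<lambda>A B. elementary_collapse A B \<or> elementary_collapse B A)\<^sup>*\<^sup>* K L"

text \<open>A finite undirected graph: finite vertex set V and symmetric edge set E \<subseteq> V \<times> V.\<close>

definition common_nbrs :: "('v \<times> 'v) set \<Rightarrow> 'v set \<Rightarrow> 'v set" where
  "common_nbrs E S = {y. \<forall>x\<in>S. (x, y) \<in> E}"

definition nbhd_complex :: "'v set \<Rightarrow> ('v \<times> 'v) set \<Rightarrow> 'v set set" where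
  "nbhd_complex V E = {S. S \<noteq> {} \<and> S \<subseteq> V \<and> common_nbrs E S \<noteq> {}}"

definition hom_K2_cells :: "'v set \<Rightarrow> ('v \<times> 'v) set \<Rightarrow> ('v set \<times> 'v set) set" where
  "hom_K2_cells V E = {(\<sigma>, \<tau>). \<sigma> \<noteq> {} \<and> \<tau> \<noteq> {} \<and> \<sigma> \<subseteq> V \<and> \<tau> \<subseteq> V \<and>
                                (\<forall>x\<in>\<sigma>. \<forall>y\<in>\<tau>. (x, y) \<in> E)}"

text \<open>Geometric realization in the ambient space ('v \<times> nat) \<Rightarrow> real:
  vertex x of the i-th copy of \<Delta>^{V} is the unit vector at (x,i).\<close>
definition unit_vec :: "nat \<Rightarrow> 'v \<Rightarrow> ('v \<times> nat) \<Rightarrow> real" where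
  "unit_vec i x = (\<lambda>p. if p = (x, i) then 1 else 0)"

definition std_simplex :: "nat \<Rightarrow> 'v set \<Rightarrow> (('v \<times> nat) \<Rightarrow> real) set" where
  "std_simplex i \<sigma> = convex hull (unit_vec i ` \<sigma>)"

definition nbhd_complex_geom :: "'v set \<Rightarrow> ('v \<times> 'v) set \<Rightarrow> (('v \<times> nat) \<Rightarrow> real) set set" where
  "nbhd_complex_geom V E = std_simplex 0 ` nbhd_complex V E"

text \<open>Geometric Hom(K_2,G) inside \<Delta>^{V(G)} \<times> \<Delta>^{V(G)} (realized on disjoint coordinates,
  so the Minkowski sum is the product cell \<sigma> \<times> \<tau>).\<close>
definition hom_K2_geom :: "'v set \<Rightarrow> ('v \<times> 'v) set \<Rightarrow> (('v \<times> nat) \<Rightarrow> real) set set" where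
  "hom_K2_geom V E =
     (\<lambda>(\<sigma>, \<tau>). {a + b | a b. a \<in> std_simplex 0 \<sigma> \<and> b \<in> std_simplex 1 \<tau>}) ` hom_K2_cells V E"

end

(*
  Both complexes sit inside the cone complex, whose cells are the products of a simplex
  sigma of N(G) with the cone C(tau) over a (possibly empty) set tau of common neighbours of
  sigma, the apex of the cone being the origin. N(G) consists of the cells sigma x apex and
  Hom(K_2,G) of the cells sigma x tau with tau nonempty, and the cone complex collapses onto
  each of them: matching sigma x tau with sigma x C(tau) for nonempty tau leaves N(G), while
  choosing a common neighbour m(sigma) of sigma and matching sigma x C(tau) with
  sigma x C(tau + m(sigma)) for m(sigma) not in tau leaves Hom(K_2,G). In both matchings the
  pairs are removed in lexicographically decreasing order of (|sigma|, |tau|), so that every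
  lower cell is a free face of codimension one when it is removed.
*)

theory Submission
  imports Defs
begin

section \<open>Faces of convex hulls and affine rank\<close>

lemma affine_linear_level_set:
  assumes "linear f"
  shows "affine {x. f x = (c::real)}"
  unfolding affine_def
proof (intro allI impI ballI)
  fix x y u v assume "x \<in> {x. f x = c}" "y \<in> {x. f x = c}" "u + v = (1::real)"
  then show "u *\<^sub>R x + v *\<^sub>R y \<in> {x. f x = c}"
    using assms by (simp add: linear_add linear_scale flip: distrib_right)
qed

lemma face_of_convex_hull_eq_hull_Int:
  fixes X :: "'a::real_vector set"
  assumes "finite X" and "F face_of convex hull X"
  shows "F = convex hull (F \<inter> X)"
  using assms
proof (induction X arbitrary: F rule: finite_induct)
  case empty
  then show ?case by simp
next
  case (insert a S)
  let ?H = "convex hull (F \<inter> insert a S)"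
  have "F \<inter> convex hull S face_of convex hull (insert a S) \<inter> convex hull S"
    using insert.prems by (rule face_of_slice) simp
  then have "F \<inter> convex hull S face_of convex hull S"
    by (metis hull_mono inf.absorb_iff2 subset_insertI)
  then have "F \<inter> convex hull S = convex hull (F \<inter> convex hull S \<inter> S)"
    by (rule insert.IH)
  also have "F \<inter> convex hull S \<inter> S = F \<inter> S"
    by (auto intro: hull_inc)
  finally have sub: "F \<inter> convex hull S \<subseteq> ?H"
    by (metis hull_mono inf_mono order_refl subset_insertI)
  have "x \<in> ?H" if x: "x \<in> F" for x
  proof (cases "x = a")
    case False
    have "x \<in> convex hull (insert a S)"
      using x insert.prems face_of_imp_subset by blast
    then obtain s where s: "s \<in> convex hull S" and xs: "x \<in> closed_segment a s"
      using False convex_hull_insert_segments[of a S] by (auto split: if_splits)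
    show ?thesis
    proof (cases "x = s")
      case False
      then have "x \<in> open_segment a s"
        using xs \<open>x \<noteq> a\<close> by (simp add: open_segment_def)
      moreover have "a \<in> convex hull (insert a S)" "s \<in> convex hull (insert a S)"
        using s hull_mono[of S "insert a S"] by (auto intro: hull_inc)
      ultimately have "a \<in> F" "s \<in> F"
        using face_ofD[OF insert.prems] x by blast+
      then have "a \<in> ?H" "s \<in> ?H"
        using s sub by (auto intro: hull_inc)
      then show ?thesis
        using xs closed_segment_subset[OF _ _ convex_convex_hull] by blast
    qed (use x s sub in blast)
  qed (use x in \<open>simp add: hull_inc\<close>)
  moreover have "?H \<subseteq> F"
    using insert.prems by (simp add: hull_minimal face_of_imp_convex)
  ultimately show ?case by blast
qed

lemma face_of_convex_hull_zero_set:
  fixes S :: "'a::real_vector set" and f :: "'a \<Rightarrow> real"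
  assumes "finite S" "linear f" "\<And>x. x \<in> S \<Longrightarrow> 0 \<le> f x"
  shows "convex hull {x\<in>S. f x = 0} face_of convex hull S"
proof (rule face_of_convex_hulls)
  have "affine hull {x\<in>S. f x = 0} \<subseteq> {x. f x = 0}"
    by (rule hull_minimal) (auto intro: affine_linear_level_set[OF assms(2)])
  moreover have "convex hull (S - {x\<in>S. f x = 0}) \<subseteq> f -` {0<..}"
    using assms by (intro hull_minimal convex_linear_vimage) (auto simp: less_le)
  ultimately show "affine hull {x\<in>S. f x = 0} \<inter> convex hull (S - {x\<in>S. f x = 0}) = {}"
    by fastforce
qed (use assms in auto)

lemma affine_independent_card_le:
  fixes X S :: "'a::real_vector set"
  assumes X: "finite X" and S: "S \<subseteq> affine hull X" and indep: "\<not> affine_dependent S"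
  shows "finite S \<and> card S \<le> card X"
proof (cases "S = {}")
  case False
  then obtain b where b: "b \<in> S" by auto
  then obtain a where a: "a \<in> X" using S by fastforce
  define T where "T = (\<lambda>x. -a + x) ` (X - {a})"
  define S' where "S' = (\<lambda>x. -b + x) ` (S - {b})"
  have hull: "affine hull X = (\<lambda>x. a + x) ` span T"
    using affine_hull_span2[OF a] by (simp add: T_def)
  have "S' \<subseteq> span T"
  proof
    fix y assume "y \<in> S'"
    then obtain s where s: "s \<in> S" "y = -b + s" by (auto simp: S'_def)
    obtain u u' where "u \<in> span T" "s = a + u" "u' \<in> span T" "b = a + u'"
      using s(1) b S hull by blast
    then have "y = u - u'" using s(2) by (simp add: algebra_simps)
    then show "y \<in> span T" using \<open>u \<in> span T\<close> \<open>u' \<in> span T\<close> by (simp add: span_diff)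
  qed
  moreover have "independent S'"
    using indep affine_dependent_iff_dependent2[OF b] by (simp add: S'_def)
  ultimately have "finite S' \<and> card S' \<le> card T"
    using X by (intro independent_span_bound) (simp_all add: T_def)
  moreover have "card T \<le> card X - 1"
    using card_image_le[of "X - {a}" "\<lambda>x. -a + x"] X a by (simp add: T_def)
  moreover have "inj_on (\<lambda>x. -b + x) (S - {b})" by (auto simp: inj_on_def)
  ultimately have "finite (S - {b})" "card (S - {b}) \<le> card X - 1"
    unfolding S'_def by (auto dest: finite_imageD simp: card_image)
  moreover have "card X \<noteq> 0" using X a by auto
  ultimately show ?thesis
    using b card_Suc_Diff1[of S b] by simp
qed simp

lemma affine_independent_insert:
  fixes S :: "'a::real_vector set"
  assumes indep: "\<not> affine_dependent S" and p: "p \<notin> affine hull S"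
  shows "\<not> affine_dependent (insert p S)"
proof (cases "S = {}")
  case False
  then obtain b where b: "b \<in> S" by auto
  let ?S' = "(\<lambda>x. -b + x) ` (S - {b})"
  have "p \<notin> S" by (meson p hull_inc)
  then have eq: "(\<lambda>x. -b + x) ` (insert p S - {b}) = insert (-b + p) ?S'"
    using b by auto
  have "-b + p \<notin> span ?S'"
  proof
    assume "-b + p \<in> span ?S'"
    then have "b + (-b + p) \<in> (\<lambda>x. b + x) ` span ?S'" by (rule imageI)
    then show False using p affine_hull_span2[OF b] by simp
  qed
  moreover have "independent ?S'"
    using indep affine_dependent_iff_dependent2[OF b] by simp
  ultimately show ?thesis
    using affine_dependent_iff_dependent2[of b "insert p S"] b eq
    by (simp add: independent_insertI)
qed simp

lemma affine_rank_eq_card: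
  fixes P S :: "'a::real_vector set"
  assumes "S \<subseteq> P" "finite S" "\<not> affine_dependent S" "P \<subseteq> affine hull S"
  shows "affine_rank P = card S"
  unfolding affine_rank_def
proof (rule Greatest_equality)
  fix n assume "\<exists>S'. S' \<subseteq> P \<and> finite S' \<and> \<not> affine_dependent S' \<and> card S' = n"
  then show "n \<le> card S"
    using affine_independent_card_le[of S] assms by auto
qed (use assms in blast)

lemma exists_affine_basis:
  fixes P X :: "'a::real_vector set"
  assumes X: "finite X" and P: "P \<subseteq> affine hull X"
  obtains S where "S \<subseteq> P" "finite S" "\<not> affine_dependent S" "P \<subseteq> affine hull S"
proof -
  define K where "K = {n. \<exists>S. S \<subseteq> P \<and> finite S \<and> \<not> affine_dependent S \<and> card S = n}"
  have "n \<le> card X" if "n \<in> K" for n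
    using that affine_independent_card_le[OF X] P by (auto simp: K_def)
  then have "finite K"
    by (meson finite_nat_set_iff_bounded_le)
  moreover have "0 \<in> K" by (auto simp: K_def intro!: exI[of _ "{}"])
  ultimately have "Max K \<in> K" by (intro Max_in) auto
  then obtain S where S: "S \<subseteq> P" "finite S" "\<not> affine_dependent S" "card S = Max K"
    by (auto simp: K_def)
  have "P \<subseteq> affine hull S"
  proof (rule ccontr)
    assume "\<not> P \<subseteq> affine hull S"
    then obtain y where y: "y \<in> P" "y \<notin> affine hull S" by blast
    then have "card (insert y S) \<in> K"
      unfolding K_def using S y affine_independent_insert[OF S(3) y(2)] by blast
    then have "card (insert y S) \<le> card S"
      using \<open>finite K\<close> S(4) by simp
    moreover have "y \<notin> S" by (meson y(2) hull_inc)
    ultimately show False using S(2) by simp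
  qed
  then show ?thesis using S that by blast
qed

lemma cell_dim_insert_point:
  fixes X lo hi :: "'a::real_vector set"
  assumes X: "finite X" and lo: "lo \<subseteq> affine hull X" and sub: "lo \<subseteq> hi"
    and p: "p \<in> hi" "p \<notin> affine hull lo" and hi: "hi \<subseteq> affine hull (insert p lo)"
  shows "cell_dim hi = cell_dim lo + 1"
proof -
  obtain S where S: "S \<subseteq> lo" "finite S" "\<not> affine_dependent S" "lo \<subseteq> affine hull S"
    using exists_affine_basis[OF X lo] .
  have "affine hull S \<subseteq> affine hull lo" by (rule hull_mono[OF S(1)])
  then have pS: "p \<notin> affine hull S" using p(2) by auto
  then have "p \<notin> S" by (auto intro: hull_inc)
  have "insert p lo \<subseteq> affine hull (insert p S)"
    using S(4) hull_mono[of S "insert p S"] hull_inc[of p "insert p S"] by blast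
  then have "affine hull (insert p lo) \<subseteq> affine hull (insert p S)"
    by (simp add: hull_minimal)
  then have "hi \<subseteq> affine hull (insert p S)" using hi by blast
  then have "affine_rank hi = card (insert p S)"
    using affine_independent_insert[OF S(3) pS]
    by (intro affine_rank_eq_card) (use S sub p(1) in auto)
  moreover have "affine_rank lo = card S" using S by (intro affine_rank_eq_card) auto
  ultimately show ?thesis using \<open>p \<notin> S\<close> S(2) by (simp add: cell_dim_def)
qed

section \<open>Collapsing along a ranked matching\<close>

abbreviation collapses :: "'a::real_vector set set \<Rightarrow> 'a set set \<Rightarrow> bool" where
  "collapses \<equiv> elementary_collapse\<^sup>*\<^sup>*"

lemma polyhedral_complex_elementary_collapse:
  assumes "elementary_collapse K L"
  shows "polyhedral_complex L"
proof -
  obtain \<sigma> \<tau> where K: "polyhedral_complex K" and "\<sigma> \<subset> \<tau>"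
    and free: "\<forall>\<rho>\<in>K. \<sigma> \<subseteq> \<rho> \<longrightarrow> \<rho> = \<sigma> \<or> \<rho> = \<tau>" and L: "L = K - {\<sigma>, \<tau>}"
    using assms unfolding elementary_collapse_def by blast
  have "F \<in> L" if "P \<in> L" "F face_of P" "F \<noteq> {}" for P F
  proof -
    have "F \<in> K" using K that L by (auto simp: polyhedral_complex_def)
    moreover have "F \<subseteq> P" using that(2) face_of_imp_subset by blast
    ultimately show ?thesis
      using free that(1) L \<open>\<sigma> \<subset> \<tau>\<close> by blast
  qed
  then show ?thesis
    using K L unfolding polyhedral_complex_def by blast
qed

lemma same_simple_homotopy_type_if_collapses:
  assumes "collapses K L1" "collapses K L2"
  shows "same_simple_homotopy_type L1 L2"
proof -
  let ?step = "\<lambda>A B. elementary_collapse A B \<or> elementary_collapse B A"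
  have step: "?step\<^sup>*\<^sup>* A B" if "collapses A B" for A B :: "'a set set"
    using that by (rule rtranclp_mono[THEN predicate2D, rotated]) auto
  have "?step\<^sup>*\<^sup>* L1 K"
    using rtranclp_converseI[OF step[OF assms(1)]] by (simp add: conversep_iff[abs_def] disj_commute)
  also have "?step\<^sup>*\<^sup>* K L2" by (rule step[OF assms(2)])
  finally show ?thesis unfolding same_simple_homotopy_type_def .
qed

text \<open>When the matched pairs \<open>lo k \<subset> up k\<close> are removed in order of decreasing rank, each \<open>lo k\<close>
  is a free face at the moment of its removal.\<close>

lemma collapses_ranked_matching:
  fixes lo up :: "'k \<Rightarrow> 'a::real_vector set" and rk :: "'k \<Rightarrow> nat"
  assumes "finite R" "polyhedral_complex K" "lo ` R \<subseteq> K" "up ` R \<subseteq> K"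
    and "\<And>k. k \<in> R \<Longrightarrow> lo k \<subset> up k \<and> cell_dim (lo k) = cell_dim (up k) - 1"
    and "\<And>k \<rho>. k \<in> R \<Longrightarrow> \<rho> \<in> K \<Longrightarrow> lo k \<subseteq> \<rho> \<Longrightarrow> \<rho> \<in> lo ` R \<union> up ` R"
    and "\<And>k k'. k \<in> R \<Longrightarrow> k' \<in> R \<Longrightarrow> k \<noteq> k' \<Longrightarrow> lo k \<subseteq> up k' \<Longrightarrow> rk k < rk k'"
  shows "collapses K (K - (lo ` R \<union> up ` R))"
  using assms
proof (induction R arbitrary: K rule: finite_ranking_induct[where f = rk])
  case empty
  then show ?case by simp
next
  case (insert k R)
  show ?case
  proof (cases "k \<in> R")
    case True
    then show ?thesis using insert by (simp add: insert_absorb)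
  next
    case False
    have pair: "lo k \<subset> up k" "cell_dim (lo k) = cell_dim (up k) - 1"
      using insert.prems(4) by auto
    have not_below: "\<not> lo k \<subseteq> up k'" if "k' \<in> R" for k'
      using insert.prems(6)[of k k'] insert.hyps(2)[OF that] that False by fastforce
    have not_matched: "lo k' \<notin> {lo k, up k}" "up k' \<notin> {lo k, up k}" if "k' \<in> R" for k'
      using not_below[OF that] pair insert.prems(4)[of k'] that by blast+
    have free: "\<rho> = lo k \<or> \<rho> = up k" if "\<rho> \<in> K" "lo k \<subseteq> \<rho>" for \<rho>
      using insert.prems(5)[of k \<rho>] that not_below insert.prems(4) by fastforce
    define K' where "K' = K - {lo k, up k}"
    have collapse: "elementary_collapse K K'"
      unfolding elementary_collapse_def K'_def
      using insert.prems(1-3) pair free by blast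
    have "collapses K' (K' - (lo ` R \<union> up ` R))"
    proof (rule insert.IH)
      show "polyhedral_complex K'"
        using collapse by (rule polyhedral_complex_elementary_collapse)
      show "lo ` R \<subseteq> K'" "up ` R \<subseteq> K'"
        using insert.prems(2,3) not_matched by (auto simp: K'_def)
      show "\<rho> \<in> lo ` R \<union> up ` R" if "k' \<in> R" "\<rho> \<in> K'" "lo k' \<subseteq> \<rho>" for k' \<rho>
        using insert.prems(5)[of k' \<rho>] that by (auto simp: K'_def)
    qed (use insert.prems in auto)
    moreover have "K' - (lo ` R \<union> up ` R) = K - (lo ` insert k R \<union> up ` insert k R)"
      by (auto simp: K'_def)
    ultimately show ?thesis
      using collapse by (simp add: converse_rtranclp_into_rtranclp)
  qed
qed

section \<open>Cone cells\<close>

text \<open>\<open>cone_cell A W\<close> is the product of the simplex on \<open>A\<close> in layer \<open>0\<close> with the simplex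
  spanned by the labels \<open>W\<close>, where \<open>Some b\<close> is the vertex \<open>b\<close> of layer \<open>1\<close> and \<open>None\<close> is the
  origin; thus \<open>W = insert None (Some ` B)\<close> gives the cone over the simplex on \<open>B\<close>.\<close>

definition cone_vertex :: "'v option \<Rightarrow> 'v \<times> nat \<Rightarrow> real" where
  "cone_vertex w = (case w of None \<Rightarrow> 0 | Some b \<Rightarrow> unit_vec 1 b)"

definition cell_vertex :: "'v \<times> 'v option \<Rightarrow> 'v \<times> nat \<Rightarrow> real" where
  "cell_vertex = (\<lambda>(a, w). unit_vec 0 a + cone_vertex w)"

definition cone_cell :: "'v set \<Rightarrow> 'v option set \<Rightarrow> ('v \<times> nat \<Rightarrow> real) set" where
  "cone_cell A W = convex hull (cell_vertex ` (A \<times> W))"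

lemma cell_vertex_apply_0: "cell_vertex (a, w) (v, 0) = of_bool (v = a)"
  by (simp add: cell_vertex_def cone_vertex_def unit_vec_def split: option.split)

lemma cell_vertex_apply_1: "cell_vertex (a, w) (b, 1) = of_bool (w = Some b)"
  by (simp add: cell_vertex_def cone_vertex_def unit_vec_def split: option.split)

lemma inj_cell_vertex: "inj cell_vertex"
proof (rule injI)
  fix p q :: "'v \<times> 'v option"
  assume eq: "cell_vertex p = cell_vertex q"
  obtain a w a' w' where pq: "p = (a, w)" "q = (a', w')" by fastforce
  have "of_bool (v = a) = (of_bool (v = a') :: real)" for v
    using fun_cong[OF eq, of "(v, 0)"] unfolding pq cell_vertex_apply_0 .
  then have "a = a'" by (metis of_bool_eq_iff)
  moreover have "of_bool (w = Some b) = (of_bool (w' = Some b) :: real)" for b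
    using fun_cong[OF eq, of "(b, 1)"] unfolding pq cell_vertex_apply_1 .
  then have "w = w'" by (cases w; cases w') (auto, metis of_bool_eq_iff)
  ultimately show "p = q" using pq by simp
qed

definition layer_sum :: "'v set \<Rightarrow> nat \<Rightarrow> ('v \<times> nat \<Rightarrow> real) \<Rightarrow> real" where
  "layer_sum S i x = (\<Sum>v\<in>S. x (v, i))"

lemma linear_layer_sum: "linear (layer_sum S i)"
  by (rule linearI) (simp_all add: layer_sum_def sum.distrib sum_distrib_left scaleR_fun_def)

lemma layer_sum_cell_vertex_0: "finite S \<Longrightarrow> layer_sum S 0 (cell_vertex (a, w)) = of_bool (a \<in> S)"
  unfolding layer_sum_def cell_vertex_apply_0 by (simp add: of_bool_def)

lemma layer_sum_cell_vertex_1: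
  "finite S \<Longrightarrow> layer_sum S 1 (cell_vertex (a, w)) = of_bool (w \<in> Some ` S)"
  unfolding layer_sum_def cell_vertex_apply_1 by (cases w) (auto simp: of_bool_def)

text \<open>On \<open>cone_cell A W\<close> the last summand equals \<open>1 - layer_sum (Some -` W) 1\<close>, which detects the
  apex \<open>None\<close>; the constant \<open>1\<close> is written as \<open>layer_sum A 0\<close> to keep the functional linear.\<close>

definition outside_count ::
    "'v set \<Rightarrow> 'v option set \<Rightarrow> 'v set \<Rightarrow> 'v option set \<Rightarrow> ('v \<times> nat \<Rightarrow> real) \<Rightarrow> real" where
  "outside_count A' W' A W x =
     layer_sum (A - A') 0 x + layer_sum (Some -` (W - W')) 1 x +
     (if None \<in> W - W' then layer_sum A 0 x - layer_sum (Some -` W) 1 x else 0)"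

lemma linear_outside_count: "linear (outside_count A' W' A W)"
proof (cases "None \<in> W - W'")
  case True
  then show ?thesis
    unfolding outside_count_def
    by (simp only: if_True) (intro linear_compose_add linear_compose_sub linear_layer_sum)
next
  case False
  then show ?thesis
    unfolding outside_count_def
    by (simp only: if_False add_0_right) (intro linear_compose_add linear_layer_sum)
qed

lemma outside_count_cell_vertex:
  assumes "finite A" "finite W" "a \<in> A" "w \<in> W"
  shows "outside_count A' W' A W (cell_vertex (a, w)) = of_bool (a \<notin> A') + of_bool (w \<notin> W')"
proof -
  have "finite (Some -` X)" if "X \<subseteq> W" for X
    using assms(2) that by (meson finite_subset finite_vimageI inj_Some)
  then show ?thesis
    unfolding outside_count_def
    using assms by (cases w) (auto simp: layer_sum_cell_vertex_0 layer_sum_cell_vertex_1 simp del: One_nat_def)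
qed

lemma cone_cell_mono: "A \<subseteq> A' \<Longrightarrow> W \<subseteq> W' \<Longrightarrow> cone_cell A W \<subseteq> cone_cell A' W'"
  unfolding cone_cell_def by (intro hull_mono image_mono Sigma_mono)

lemma cone_cell_eq_empty_iff: "cone_cell A W = {} \<longleftrightarrow> A = {} \<or> W = {}"
  by (simp add: cone_cell_def)

lemma polytope_cone_cell: "finite A \<Longrightarrow> finite W \<Longrightarrow> polytope (cone_cell A W)"
  unfolding cone_cell_def by (simp add: polytope_convex_hull)

lemma cone_cell_eq_hull_outside_count_zero:
  assumes "finite A" "finite W" "A' \<subseteq> A" "W' \<subseteq> W"
  shows "cone_cell A' W' =
    convex hull {x \<in> cell_vertex ` (A \<times> W). outside_count A' W' A W x = 0}"
proof -
  have zero_iff: "outside_count A' W' A W (cell_vertex p) = 0 \<longleftrightarrow> p \<in> A' \<times> W'" if "p \<in> A \<times> W" for p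
    using that assms(1,2) by (cases p) (auto simp: outside_count_cell_vertex of_bool_def)
  have "{x \<in> cell_vertex ` (A \<times> W). outside_count A' W' A W x = 0} =
      cell_vertex ` {p \<in> A \<times> W. outside_count A' W' A W (cell_vertex p) = 0}"
    by blast
  also have "{p \<in> A \<times> W. outside_count A' W' A W (cell_vertex p) = 0} = A' \<times> W'"
    using zero_iff assms(3,4) by blast
  finally show ?thesis by (simp add: cone_cell_def)
qed

lemma cone_cell_face_of:
  assumes "finite A" "finite W" "A' \<subseteq> A" "W' \<subseteq> W"
  shows "cone_cell A' W' face_of cone_cell A W"
proof -
  have "convex hull {x \<in> cell_vertex ` (A \<times> W). outside_count A' W' A W x = 0}
      face_of convex hull (cell_vertex ` (A \<times> W))"
    by (rule face_of_convex_hull_zero_set)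
       (use assms in \<open>auto simp: linear_outside_count outside_count_cell_vertex\<close>)
  then show ?thesis
    unfolding cone_cell_eq_hull_outside_count_zero[OF assms] cone_cell_def[of A W] .
qed

lemma outside_count_affine_hull_cone_cell:
  assumes "finite A" "finite W" "A' \<subseteq> A" "W' \<subseteq> W" "x \<in> affine hull (cone_cell A' W')"
  shows "outside_count A' W' A W x = 0"
proof -
  have "affine {x. outside_count A' W' A W x = 0}"
    by (intro affine_linear_level_set linear_outside_count)
  then have "affine hull {x \<in> cell_vertex ` (A \<times> W). outside_count A' W' A W x = 0}
      \<subseteq> {x. outside_count A' W' A W x = 0}"
    by (intro hull_minimal) auto
  then show ?thesis
    using assms(5) unfolding cone_cell_eq_hull_outside_count_zero[OF assms(1-4)] affine_hull_convex_hull
    by blast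
qed

lemma cell_vertex_in_cone_cell_iff:
  assumes "finite A" "finite W"
  shows "cell_vertex p \<in> cone_cell A W \<longleftrightarrow> p \<in> A \<times> W"
proof
  obtain a w where p: "p = (a, w)" by fastforce
  assume "cell_vertex p \<in> cone_cell A W"
  then have "cell_vertex p \<in> affine hull (cone_cell A W)" by (rule hull_inc)
  then have "outside_count A W (insert a A) (insert w W) (cell_vertex (a, w)) = 0"
    using assms p by (intro outside_count_affine_hull_cone_cell) auto
  then show "p \<in> A \<times> W"
    using assms p by (simp add: outside_count_cell_vertex of_bool_def split: if_splits)
qed (auto simp: cone_cell_def intro: hull_inc)

lemma cone_cell_subset_iff:
  assumes "finite A'" "finite W'" "A \<noteq> {}" "W \<noteq> {}"
  shows "cone_cell A W \<subseteq> cone_cell A' W' \<longleftrightarrow> A \<subseteq> A' \<and> W \<subseteq> W'"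
proof
  assume sub: "cone_cell A W \<subseteq> cone_cell A' W'"
  have "cell_vertex ` (A \<times> W) \<subseteq> cone_cell A W"
    unfolding cone_cell_def by (rule hull_subset)
  then have "A \<times> W \<subseteq> A' \<times> W'"
    using sub cell_vertex_in_cone_cell_iff[OF assms(1,2)] by blast
  then show "A \<subseteq> A' \<and> W \<subseteq> W'"
    using assms(3,4) by (simp add: times_subset_iff)
qed (use cone_cell_mono in blast)

lemma cone_cell_psubset_insert:
  assumes "finite A" "finite W" "A \<noteq> {}" "W \<noteq> {}" "w \<notin> W"
  shows "cone_cell A W \<subset> cone_cell A (insert w W)"
  using cone_cell_subset_iff[of A "insert w W" A W] cone_cell_subset_iff[of A W A "insert w W"] assms
  by auto

lemma cone_cell_Int:
  assumes "finite A1" "finite W1" "finite A2" "finite W2"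
  shows "cone_cell A1 W1 \<inter> cone_cell A2 W2 = cone_cell (A1 \<inter> A2) (W1 \<inter> W2)"
proof -
  let ?A = "A1 \<union> A2" and ?W = "W1 \<union> W2"
  have fin: "finite ?A" "finite ?W" using assms by auto
  have "cone_cell A1 W1 \<inter> cone_cell A2 W2 face_of cone_cell ?A ?W"
    using fin by (intro face_of_Int cone_cell_face_of) auto
  then have "cone_cell A1 W1 \<inter> cone_cell A2 W2 =
      convex hull (cone_cell A1 W1 \<inter> cone_cell A2 W2 \<inter> cell_vertex ` (?A \<times> ?W))"
    unfolding cone_cell_def[of ?A ?W] using fin by (intro face_of_convex_hull_eq_hull_Int) auto
  also have "cone_cell A1 W1 \<inter> cone_cell A2 W2 \<inter> cell_vertex ` (?A \<times> ?W) =
      cell_vertex ` ((A1 \<inter> A2) \<times> (W1 \<inter> W2))"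
    using assms by (auto simp: cell_vertex_in_cone_cell_iff)
  finally show ?thesis by (simp add: cone_cell_def)
qed

text \<open>The vertex labels of a face form a rectangle \<open>A' \<times> W'\<close>, because the segments joining
  \<open>(a, w')\<close> to \<open>(a', w)\<close> and \<open>(a, w)\<close> to \<open>(a', w')\<close> have the same midpoint.\<close>

lemma face_of_cone_cell:
  assumes "finite A" "finite W" "F face_of cone_cell A W"
  obtains A' W' where "A' \<subseteq> A" "W' \<subseteq> W" "F = cone_cell A' W'"
proof -
  define S where "S = {p \<in> A \<times> W. cell_vertex p \<in> F}"
  have "F = convex hull (F \<inter> cell_vertex ` (A \<times> W))"
    using assms by (intro face_of_convex_hull_eq_hull_Int) (auto simp: cone_cell_def)
  also have "F \<inter> cell_vertex ` (A \<times> W) = cell_vertex ` S"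
    by (auto simp: S_def)
  finally have F: "F = convex hull (cell_vertex ` S)" .
  have swap: "(a, w) \<in> S" if "(a, w') \<in> S" "(a', w) \<in> S" for a w a' w'
  proof (cases "cell_vertex (a, w) = cell_vertex (a', w')")
    case True
    then show ?thesis using that(2) inj_cell_vertex by (auto dest: injD)
  next
    case False
    let ?m = "midpoint (cell_vertex (a, w')) (cell_vertex (a', w))"
    have "cell_vertex (a, w') \<in> F" "cell_vertex (a', w) \<in> F"
      using that by (auto simp: S_def)
    then have "(1/2) *\<^sub>R cell_vertex (a, w') + (1/2) *\<^sub>R cell_vertex (a', w) \<in> F"
      using face_of_imp_convex[OF assms(3)] by (intro convexD) auto
    then have "?m \<in> F" by (simp add: midpoint_def scaleR_add_right)
    have "?m = midpoint (cell_vertex (a, w)) (cell_vertex (a', w'))"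
      by (simp add: midpoint_def cell_vertex_def algebra_simps)
    then have "?m \<in> open_segment (cell_vertex (a, w)) (cell_vertex (a', w'))"
      using False by simp
    moreover have "cell_vertex (a, w) \<in> cone_cell A W" "cell_vertex (a', w') \<in> cone_cell A W"
      using that by (auto simp: S_def cone_cell_def intro: hull_inc)
    ultimately have "cell_vertex (a, w) \<in> F"
      using \<open>?m \<in> F\<close> face_ofD[OF assms(3)] by blast
    then show ?thesis using that by (auto simp: S_def)
  qed
  have "S = fst ` S \<times> snd ` S"
  proof
    show "S \<subseteq> fst ` S \<times> snd ` S" by (auto intro: rev_image_eqI)
    show "fst ` S \<times> snd ` S \<subseteq> S" using swap by fastforce
  qed
  then have "F = cone_cell (fst ` S) (snd ` S)"
    using F by (simp add: cone_cell_def)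
  moreover have "fst ` S \<subseteq> A" "snd ` S \<subseteq> W" by (auto simp: S_def)
  ultimately show ?thesis using that by blast
qed

lemma cone_cell_dim_insert:
  assumes "finite A" "finite W" "A \<noteq> {}" "W \<noteq> {}" "w \<notin> W"
  shows "cell_dim (cone_cell A (insert w W)) = cell_dim (cone_cell A W) + 1"
proof -
  obtain a0 w0 where a0: "a0 \<in> A" and w0: "w0 \<in> W" using assms(3,4) by blast
  define p where "p = cell_vertex (a0, w)"
  let ?H = "affine hull (insert p (cone_cell A W))"
  have "p \<notin> affine hull (cone_cell A W)"
  proof
    assume "p \<in> affine hull (cone_cell A W)"
    then have "outside_count A W A (insert w W) p = 0"
      using assms by (intro outside_count_affine_hull_cone_cell) auto
    then show False
      using assms a0 by (simp add: p_def outside_count_cell_vertex)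
  qed
  moreover have "cone_cell A (insert w W) \<subseteq> ?H"
    unfolding cone_cell_def[of A "insert w W"]
  proof (intro hull_minimal affine_imp_convex subsetI)
    fix x assume "x \<in> cell_vertex ` (A \<times> insert w W)"
    then obtain a w' where x: "x = cell_vertex (a, w')" "a \<in> A" "w' \<in> insert w W" by auto
    have in_H: "cell_vertex q \<in> ?H" if "q \<in> A \<times> W" for q
      using that by (auto simp: cone_cell_def intro!: hull_inc)
    show "x \<in> ?H"
    proof (cases "w' = w")
      case True
      have "p + 1 *\<^sub>R (cell_vertex (a, w0) - cell_vertex (a0, w0)) \<in> ?H"
        using in_H a0 w0 x(2) by (intro mem_affine_3_minus) (auto intro: hull_inc)
      then show ?thesis using True x(1) by (simp add: p_def cell_vertex_def algebra_simps)
    qed (use x in_H in auto)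
  qed simp
  moreover have "cone_cell A W \<subseteq> affine hull (cell_vertex ` (A \<times> W))"
    unfolding cone_cell_def by (rule convex_hull_subset_affine_hull)
  moreover have "cone_cell A W \<subseteq> cone_cell A (insert w W)"
    by (rule cone_cell_mono) auto
  moreover have "p \<in> cone_cell A (insert w W)"
    using a0 by (auto simp: p_def cone_cell_def intro: hull_inc)
  ultimately show ?thesis
    using assms(1,2) by (intro cell_dim_insert_point[of "cell_vertex ` (A \<times> W)"]) auto
qed

section \<open>The cone complex\<close>

lemma common_nbrs_subset: "E \<subseteq> V \<times> V \<Longrightarrow> A \<noteq> {} \<Longrightarrow> common_nbrs E A \<subseteq> V"
  by (auto simp: common_nbrs_def)

lemma common_nbrs_antimono: "A' \<subseteq> A \<Longrightarrow> common_nbrs E A \<subseteq> common_nbrs E A'"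
  by (auto simp: common_nbrs_def)

definition cone_complex_cells :: "'v set \<Rightarrow> ('v \<times> 'v) set \<Rightarrow> ('v set \<times> 'v option set) set" where
  "cone_complex_cells V E =
     {(A, W). A \<in> nbhd_complex V E \<and> W \<noteq> {} \<and> W \<subseteq> insert None (Some ` common_nbrs E A)}"

definition cone_complex :: "'v set \<Rightarrow> ('v \<times> 'v) set \<Rightarrow> ('v \<times> nat \<Rightarrow> real) set set" where
  "cone_complex V E = (\<lambda>(A, W). cone_cell A W) ` cone_complex_cells V E"

lemma cone_complex_cells_subset:
  assumes "E \<subseteq> V \<times> V"
  shows "cone_complex_cells V E \<subseteq> Pow V \<times> Pow (insert None (Some ` V))"
proof
  fix p assume "p \<in> cone_complex_cells V E"
  then obtain A W where p: "p = (A, W)" and "(A, W) \<in> cone_complex_cells V E"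
    by (cases p) auto
  then have A: "A \<noteq> {}" "A \<subseteq> V" and W: "W \<subseteq> insert None (Some ` common_nbrs E A)"
    by (auto simp: cone_complex_cells_def nbhd_complex_def)
  have "Some ` common_nbrs E A \<subseteq> Some ` V"
    using common_nbrs_subset[OF assms A(1)] by (rule image_mono)
  then show "p \<in> Pow V \<times> Pow (insert None (Some ` V))"
    using p A(2) W by blast
qed

lemma finite_cone_complex_cells: "finite V \<Longrightarrow> E \<subseteq> V \<times> V \<Longrightarrow> finite (cone_complex_cells V E)"
  by (rule finite_subset[OF cone_complex_cells_subset]) auto

lemma cone_complex_cellsD:
  assumes "(A, W) \<in> cone_complex_cells V E" "finite V" "E \<subseteq> V \<times> V"
  shows "finite A" "finite W" "A \<noteq> {}" "W \<noteq> {}" "card W \<le> card V + 1"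
proof -
  have sub: "A \<subseteq> V" "W \<subseteq> insert None (Some ` V)"
    using assms(1) cone_complex_cells_subset[OF assms(3)] by auto
  then show "finite A" "finite W"
    using assms(2) finite_subset by blast+
  show "A \<noteq> {}" "W \<noteq> {}"
    using assms(1) by (auto simp: cone_complex_cells_def nbhd_complex_def)
  have "card W \<le> card (insert None (Some ` V))"
    using sub(2) assms(2) by (intro card_mono) auto
  also have "\<dots> \<le> card V + 1"
    using card_image_le[OF assms(2), of Some] assms(2) by (simp add: card_insert_if)
  finally show "card W \<le> card V + 1" .
qed

lemma cone_complex_cells_downward_closed:
  assumes "(A, W) \<in> cone_complex_cells V E" "A' \<subseteq> A" "W' \<subseteq> W" "A' \<noteq> {}" "W' \<noteq> {}"
  shows "(A', W') \<in> cone_complex_cells V E"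
proof -
  have "Some ` common_nbrs E A \<subseteq> Some ` common_nbrs E A'"
    using common_nbrs_antimono[OF assms(2)] by (rule image_mono)
  moreover have "W \<subseteq> insert None (Some ` common_nbrs E A)"
    using assms(1) by (simp add: cone_complex_cells_def)
  ultimately have "W' \<subseteq> insert None (Some ` common_nbrs E A')"
    using assms(3) by blast
  moreover have "common_nbrs E A \<noteq> {}"
    using assms(1) by (simp add: cone_complex_cells_def nbhd_complex_def)
  then have "common_nbrs E A' \<noteq> {}"
    using common_nbrs_antimono[OF assms(2), of E] by blast
  ultimately show ?thesis
    using assms by (auto simp: cone_complex_cells_def nbhd_complex_def)
qed

lemma polyhedral_complex_cone_complex:
  assumes V: "finite V" "E \<subseteq> V \<times> V"
  shows "polyhedral_complex (cone_complex V E)"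
  unfolding polyhedral_complex_def
proof (intro conjI ballI allI impI)
  show "finite (cone_complex V E)"
    using finite_cone_complex_cells[OF V] by (simp add: cone_complex_def)
  fix P assume "P \<in> cone_complex V E"
  then obtain A W where AW: "(A, W) \<in> cone_complex_cells V E" and P: "P = cone_cell A W"
    by (auto simp: cone_complex_def)
  note AW' = cone_complex_cellsD[OF AW V]
  show "polytope P" "P \<noteq> {}"
    using AW' by (simp_all add: P polytope_cone_cell cone_cell_eq_empty_iff)
  show "F \<in> cone_complex V E" if F: "F face_of P \<and> F \<noteq> {}" for F
  proof -
    have "F face_of cone_cell A W" using F P by simp
    then obtain A' W' where "A' \<subseteq> A" "W' \<subseteq> W" and F_eq: "F = cone_cell A' W'"
      by (rule face_of_cone_cell[OF AW'(1,2)])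
    moreover have "A' \<noteq> {}" "W' \<noteq> {}"
      using F F_eq by (auto simp: cone_cell_eq_empty_iff)
    ultimately have "(A', W') \<in> cone_complex_cells V E"
      using cone_complex_cells_downward_closed[OF AW] by blast
    then show ?thesis
      unfolding cone_complex_def F_eq by (rule image_eqI[rotated]) simp
  qed
  fix Q assume "Q \<in> cone_complex V E"
  then obtain A2 W2 where AW2: "(A2, W2) \<in> cone_complex_cells V E" and Q: "Q = cone_cell A2 W2"
    by (auto simp: cone_complex_def)
  note AW2' = cone_complex_cellsD[OF AW2 V]
  have "P \<inter> Q = cone_cell (A \<inter> A2) (W \<inter> W2)"
    using AW' AW2' by (simp add: P Q cone_cell_Int)
  then show "P \<inter> Q = {} \<or> P \<inter> Q face_of P \<and> P \<inter> Q face_of Q"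
    using AW' AW2' by (simp add: P Q cone_cell_face_of)
qed

lemma cone_complex_cell_subset_iff:
  assumes "(A, W) \<in> cone_complex_cells V E" "(A', W') \<in> cone_complex_cells V E" "finite V" "E \<subseteq> V \<times> V"
  shows "cone_cell A W \<subseteq> cone_cell A' W' \<longleftrightarrow> A \<subseteq> A' \<and> W \<subseteq> W'"
  using cone_complex_cellsD[OF assms(1,3,4)] cone_complex_cellsD[OF assms(2,3,4)]
  by (simp add: cone_cell_subset_iff)

lemma inj_on_cone_cell:
  assumes "finite V" "E \<subseteq> V \<times> V"
  shows "inj_on (\<lambda>(A, W). cone_cell A W) (cone_complex_cells V E)"
proof (rule inj_onI, clarify)
  fix A W A' W'
  assume "(A, W) \<in> cone_complex_cells V E" "(A', W') \<in> cone_complex_cells V E"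
    and "cone_cell A W = cone_cell A' W'"
  then show "A = A' \<and> W = W'"
    using cone_complex_cell_subset_iff[of A W V E A' W'] cone_complex_cell_subset_iff[of A' W' V E A W] assms
    by auto
qed

definition cell_rank :: "nat \<Rightarrow> 'v set \<times> 'v option set \<Rightarrow> nat" where
  "cell_rank n = (\<lambda>(A, W). card A * (n + 1) + card W)"

lemma cell_rank_less:
  assumes "A \<subseteq> A'" "W \<subseteq> insert w W'" "A = A' \<Longrightarrow> w \<notin> W" "(A, W) \<noteq> (A', W')"
    and "finite A'" "finite W'" "card W \<le> n"
  shows "cell_rank n (A, W) < cell_rank n (A', W')"
proof (cases "A = A'")
  case True
  then have "W \<subset> W'" using assms(2-4) by auto
  then show ?thesis using True psubset_card_mono[OF assms(6)] by (simp add: cell_rank_def)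
next
  case False
  then have "A \<subset> A'" using assms(1) by blast
  then have "card A < card A'" by (rule psubset_card_mono[OF assms(5)])
  then have "card A + 1 \<le> card A'" by simp
  then have "(card A + 1) * (n + 1) \<le> card A' * (n + 1)" by (rule mult_right_mono) simp
  then show ?thesis using assms(7) by (simp add: cell_rank_def algebra_simps)
qed

definition insert_label :: "('v set \<Rightarrow> 'v option) \<Rightarrow> 'v set \<times> 'v option set \<Rightarrow> 'v set \<times> 'v option set" where
  "insert_label new = (\<lambda>(A, W). (A, insert (new A) W))"

text \<open>Since the inserted label depends on \<open>A\<close> only, removing the matched pairs in decreasing
  order of \<open>cell_rank\<close>, i.e. lexicographically by \<open>(card A, card W)\<close>, always works.\<close>

lemma cone_complex_collapses_matching:
  fixes new :: "'v set \<Rightarrow> 'v option"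
  assumes V: "finite V" "E \<subseteq> V \<times> V" and R: "R \<subseteq> cone_complex_cells V E"
    and new: "\<And>A W. (A, W) \<in> R \<Longrightarrow> new A \<notin> W \<and> (A, insert (new A) W) \<in> cone_complex_cells V E"
    and closed: "\<And>A W A' W'. (A, W) \<in> R \<Longrightarrow> (A', W') \<in> cone_complex_cells V E \<Longrightarrow>
      A \<subseteq> A' \<Longrightarrow> W \<subseteq> W' \<Longrightarrow> (A', W') \<in> R \<union> insert_label new ` R"
  shows "collapses (cone_complex V E)
    (cone_complex V E - (\<lambda>(A, W). cone_cell A W) ` (R \<union> insert_label new ` R))"
proof -
  let ?C = "cone_complex_cells V E"
  let ?cell = "\<lambda>(A, W). cone_cell A W :: ('v \<times> nat \<Rightarrow> real) set"
  let ?up = "insert_label new"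
  have up_in: "?up p \<in> ?C" if "p \<in> R" for p
    using new that by (cases p) (auto simp: insert_label_def)
  have sub_iff: "?cell p \<subseteq> ?cell q \<longleftrightarrow> fst p \<subseteq> fst q \<and> snd p \<subseteq> snd q" if "p \<in> ?C" "q \<in> ?C" for p q
    using cone_complex_cell_subset_iff[of "fst p" "snd p" V E "fst q" "snd q"] that V
    by (simp add: case_prod_beta)
  have cell_in: "?cell p \<in> cone_complex V E" if "p \<in> ?C" for p
    using that by (simp add: cone_complex_def)
  have "collapses (cone_complex V E) (cone_complex V E - (?cell ` R \<union> (?cell \<circ> ?up) ` R))"
  proof (rule collapses_ranked_matching[where rk = "cell_rank (card V + 1)"])
    show "finite R"
      using finite_cone_complex_cells[OF V] R by (rule finite_subset[rotated])
    show "polyhedral_complex (cone_complex V E)"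
      by (rule polyhedral_complex_cone_complex[OF V])
    show "?cell ` R \<subseteq> cone_complex V E"
      using cell_in R by (intro image_subsetI) blast
    show "(?cell \<circ> ?up) ` R \<subseteq> cone_complex V E"
      using cell_in up_in by (intro image_subsetI) simp
  next
    fix p assume "p \<in> R"
    then obtain A W where p: "p = (A, W)" "(A, W) \<in> R" by (cases p) auto
    then have "new A \<notin> W" and fin: "finite A" "finite W" "A \<noteq> {}" "W \<noteq> {}"
      using new R cone_complex_cellsD[OF _ V, of A W] by auto
    then show "?cell p \<subset> (?cell \<circ> ?up) p \<and> cell_dim (?cell p) = cell_dim ((?cell \<circ> ?up) p) - 1"
      using cone_cell_psubset_insert[OF fin] cone_cell_dim_insert[OF fin]
      by (simp add: p insert_label_def)
  next
    fix p \<rho> assume p: "p \<in> R" and \<rho>: "\<rho> \<in> cone_complex V E" "?cell p \<subseteq> \<rho>"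
    from \<rho>(1) obtain q where q: "q \<in> ?C" "\<rho> = ?cell q"
      unfolding cone_complex_def by blast
    have "p \<in> ?C" using p R by blast
    then have "fst p \<subseteq> fst q" "snd p \<subseteq> snd q"
      using sub_iff[OF _ q(1)] \<rho>(2) q(2) by simp_all
    then have "q \<in> R \<union> ?up ` R"
      using closed[of "fst p" "snd p" "fst q" "snd q"] p q(1) by simp
    then show "\<rho> \<in> ?cell ` R \<union> (?cell \<circ> ?up) ` R"
      using q(2) by (auto simp: image_comp)
  next
    fix p q assume pq: "p \<in> R" "q \<in> R" "p \<noteq> q" "?cell p \<subseteq> (?cell \<circ> ?up) q"
    obtain A W A' W' where p: "p = (A, W)" and q: "q = (A', W')" by fastforce
    have C: "(A, W) \<in> ?C" "(A', W') \<in> ?C" "(A', insert (new A') W') \<in> ?C"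
      using pq(1,2) R new[of A' W'] by (auto simp: p q)
    have "cone_cell A W \<subseteq> cone_cell A' (insert (new A') W')"
      using pq(4) by (simp add: p q insert_label_def)
    then have "A \<subseteq> A'" "W \<subseteq> insert (new A') W'"
      using sub_iff[OF C(1,3)] by simp_all
    then show "cell_rank (card V + 1) p < cell_rank (card V + 1) q"
      unfolding p q
      using new[of A W] pq(1,3) cone_complex_cellsD[OF C(2) V] cone_complex_cellsD[OF C(1) V]
      by (intro cell_rank_less[where w = "new A'"]) (auto simp: p q)
  qed
  then show ?thesis by (simp add: image_Un image_comp)
qed

lemma cone_complex_collapses:
  fixes new :: "'v set \<Rightarrow> 'v option"
  assumes V: "finite V" "E \<subseteq> V \<times> V"
    and L: "L \<subseteq> cone_complex_cells V E" and R: "R \<subseteq> cone_complex_cells V E"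
    and new: "\<And>A W. (A, W) \<in> R \<Longrightarrow> new A \<notin> W \<and> (A, insert (new A) W) \<in> cone_complex_cells V E"
    and matched: "\<And>p. p \<in> cone_complex_cells V E \<Longrightarrow> p \<notin> L \<Longrightarrow> p \<in> R \<union> insert_label new ` R"
    and unmatched: "L \<inter> (R \<union> insert_label new ` R) = {}"
    and upward: "\<And>A W A' W'. (A, W) \<in> R \<Longrightarrow> A \<subseteq> A' \<Longrightarrow> W \<subseteq> W' \<Longrightarrow> (A', W') \<notin> L"
  shows "collapses (cone_complex V E) ((\<lambda>(A, W). cone_cell A W) ` L)"
proof -
  let ?C = "cone_complex_cells V E"
  let ?M = "R \<union> insert_label new ` R"
  have "collapses (cone_complex V E) (cone_complex V E - (\<lambda>(A, W). cone_cell A W) ` ?M)"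
    using upward matched by (intro cone_complex_collapses_matching[OF V R new]) blast+
  moreover have "?M \<subseteq> ?C"
    using R new by (auto simp: insert_label_def)
  then have "cone_complex V E - (\<lambda>(A, W). cone_cell A W) ` ?M = (\<lambda>(A, W). cone_cell A W) ` (?C - ?M)"
    unfolding cone_complex_def by (simp add: inj_on_image_set_diff[OF inj_on_cone_cell[OF V]])
  moreover have "?C - ?M = L"
    using L unmatched matched by blast
  ultimately show ?thesis by simp
qed

section \<open>The two collapses\<close>

lemma std_simplex_eq_cone_cell: "std_simplex 0 A = cone_cell A {None}"
proof -
  have times: "A \<times> {None} = (\<lambda>a. (a, None)) ` A" by auto
  have vertex: "cell_vertex (a, None) = unit_vec 0 a" for a :: 'v
    by (simp add: cell_vertex_def cone_vertex_def)
  have "cell_vertex ` (A \<times> {None}) = unit_vec 0 ` A"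
    unfolding times image_image vertex by simp
  then show ?thesis by (simp add: std_simplex_def cone_cell_def)
qed

lemma hom_K2_cell_eq_cone_cell:
  "{a + b | a b. a \<in> std_simplex 0 \<sigma> \<and> b \<in> std_simplex 1 \<tau>} = cone_cell \<sigma> (Some ` \<tau>)"
proof -
  have "cell_vertex ` (\<sigma> \<times> Some ` \<tau>) = unit_vec 0 ` \<sigma> + unit_vec 1 ` \<tau>"
  proof (intro equalityI subsetI)
    fix x assume "x \<in> cell_vertex ` (\<sigma> \<times> Some ` \<tau>)"
    then obtain a b where "a \<in> \<sigma>" "b \<in> \<tau>" "x = cell_vertex (a, Some b)" by auto
    then show "x \<in> unit_vec 0 ` \<sigma> + unit_vec 1 ` \<tau>"
      by (auto simp: cell_vertex_def cone_vertex_def)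
  next
    fix x assume "x \<in> unit_vec 0 ` \<sigma> + unit_vec 1 ` \<tau>"
    then obtain a b where "a \<in> \<sigma>" "b \<in> \<tau>" "x = unit_vec 0 a + unit_vec 1 b"
      by (auto elim!: set_plus_elim)
    moreover have "unit_vec 0 a + unit_vec 1 b = cell_vertex (a, Some b)"
      by (simp add: cell_vertex_def cone_vertex_def)
    ultimately show "x \<in> cell_vertex ` (\<sigma> \<times> Some ` \<tau>)" by blast
  qed
  then have "cone_cell \<sigma> (Some ` \<tau>) = std_simplex 0 \<sigma> + std_simplex 1 \<tau>"
    by (simp add: cone_cell_def std_simplex_def convex_hull_set_plus)
  then show ?thesis by (auto simp: set_plus_def)
qed

lemma cone_complex_cell_Some_iff:
  assumes "E \<subseteq> V \<times> V"
  shows "(A, Some ` B) \<in> cone_complex_cells V E \<longleftrightarrow> (A, B) \<in> hom_K2_cells V E"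
proof -
  have "Some ` B \<subseteq> insert None (Some ` common_nbrs E A) \<longleftrightarrow> B \<subseteq> common_nbrs E A"
    by auto
  moreover have "B \<subseteq> common_nbrs E A \<longleftrightarrow> (\<forall>x\<in>A. \<forall>y\<in>B. (x, y) \<in> E)"
    by (auto simp: common_nbrs_def)
  moreover have "B \<subseteq> V" if "A \<noteq> {}" "B \<subseteq> common_nbrs E A"
    using that common_nbrs_subset[OF assms] by blast
  ultimately show ?thesis
    by (auto simp: cone_complex_cells_def hom_K2_cells_def nbhd_complex_def)
qed

lemma cone_complex_cells_without_apex:
  assumes "E \<subseteq> V \<times> V"
  shows "{p \<in> cone_complex_cells V E. None \<notin> snd p} = (\<lambda>(\<sigma>, \<tau>). (\<sigma>, Some ` \<tau>)) ` hom_K2_cells V E"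
proof (intro equalityI subsetI)
  fix p assume p: "p \<in> {p \<in> cone_complex_cells V E. None \<notin> snd p}"
  obtain A W where AW: "p = (A, W)" by fastforce
  have "W = Some ` (Some -` W)"
    using p AW by (auto simp: image_iff) (metis not_None_eq)
  then obtain B where W: "W = Some ` B" by blast
  then have "(A, B) \<in> hom_K2_cells V E"
    using p AW cone_complex_cell_Some_iff[OF assms] by simp
  then show "p \<in> (\<lambda>(\<sigma>, \<tau>). (\<sigma>, Some ` \<tau>)) ` hom_K2_cells V E"
    using AW W by (auto intro: image_eqI[rotated])
qed (use cone_complex_cell_Some_iff[OF assms] in auto)

lemma cone_complex_collapses_to_nbhd_complex:
  fixes V :: "'v set"
  assumes V: "finite V" "E \<subseteq> V \<times> V"
  shows "collapses (cone_complex V E) (nbhd_complex_geom V E)"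
proof -
  let ?C = "cone_complex_cells V E"
  define L where "L = (\<lambda>A. (A, {None :: 'v option})) ` nbhd_complex V E"
  define R where "R = {p \<in> ?C. None \<notin> snd p}"
  have C_iff: "(A, W) \<in> ?C \<longleftrightarrow> A \<in> nbhd_complex V E \<and> W \<noteq> {} \<and> W \<subseteq> insert None (Some ` common_nbrs E A)"
    for A W by (simp add: cone_complex_cells_def)
  have "collapses (cone_complex V E) ((\<lambda>(A, W). cone_cell A W) ` L)"
  proof (rule cone_complex_collapses[OF V, where new = "\<lambda>_. None"])
    show "L \<subseteq> ?C" "R \<subseteq> ?C" by (auto simp: L_def R_def C_iff)
    show "None \<notin> W \<and> (A, insert None W) \<in> ?C" if "(A, W) \<in> R" for A W
      using that by (auto simp: R_def C_iff)
    show "p \<in> R \<union> insert_label (\<lambda>_. None) ` R" if "p \<in> ?C" "p \<notin> L" for p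
    proof -
      obtain A W where p: "p = (A, W)" by fastforce
      show ?thesis
      proof (cases "None \<in> W")
        case True
        then have "W - {None} \<noteq> {}" using that by (auto simp: p L_def C_iff)
        then have "(A, W - {None}) \<in> R"
          using that cone_complex_cells_downward_closed[of A W V E A "W - {None}"]
          by (auto simp: p R_def C_iff)
        moreover have "p = insert_label (\<lambda>_. None) (A, W - {None})"
          using True by (auto simp: p insert_label_def)
        ultimately show ?thesis by blast
      qed (use that p R_def in auto)
    qed
    show "L \<inter> (R \<union> insert_label (\<lambda>_. None) ` R) = {}"
      by (auto simp: L_def R_def C_iff insert_label_def)
    show "(A', W') \<notin> L" if "(A, W) \<in> R" "A \<subseteq> A'" "W \<subseteq> W'" for A W A' W'
      using that by (auto simp: L_def R_def C_iff)
  qed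
  moreover have "(\<lambda>(A, W). cone_cell A W) ` L = nbhd_complex_geom V E"
    by (simp add: L_def nbhd_complex_geom_def image_image std_simplex_eq_cone_cell)
  ultimately show ?thesis by simp
qed

lemma cone_complex_collapses_to_hom_K2:
  assumes V: "finite V" "E \<subseteq> V \<times> V"
  shows "collapses (cone_complex V E) (hom_K2_geom V E)"
proof -
  let ?C = "cone_complex_cells V E"
  define m where "m A = (SOME y. y \<in> common_nbrs E A)" for A
  define L where "L = {p \<in> ?C. None \<notin> snd p}"
  define R where "R = {p \<in> ?C. None \<in> snd p \<and> Some (m (fst p)) \<notin> snd p}"
  have C_iff: "(A, W) \<in> ?C \<longleftrightarrow> A \<in> nbhd_complex V E \<and> W \<noteq> {} \<and> W \<subseteq> insert None (Some ` common_nbrs E A)"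
    for A W by (simp add: cone_complex_cells_def)
  have m: "m A \<in> common_nbrs E A" if "A \<in> nbhd_complex V E" for A
    using that unfolding m_def nbhd_complex_def by (auto intro: someI_ex)
  have "collapses (cone_complex V E) ((\<lambda>(A, W). cone_cell A W) ` L)"
  proof (rule cone_complex_collapses[OF V, where new = "\<lambda>A. Some (m A)"])
    show "L \<subseteq> ?C" "R \<subseteq> ?C" by (auto simp: L_def R_def)
    show "Some (m A) \<notin> W \<and> (A, insert (Some (m A)) W) \<in> ?C" if "(A, W) \<in> R" for A W
      using that m by (auto simp: R_def C_iff)
    show "p \<in> R \<union> insert_label (\<lambda>A. Some (m A)) ` R" if "p \<in> ?C" "p \<notin> L" for p
    proof -
      obtain A W where p: "p = (A, W)" by fastforce
      have "None \<in> W" using that by (auto simp: p L_def)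
      show ?thesis
      proof (cases "Some (m A) \<in> W")
        case True
        have "(A, W - {Some (m A)}) \<in> R"
          using that \<open>None \<in> W\<close> cone_complex_cells_downward_closed[of A W V E A "W - {Some (m A)}"]
          by (auto simp: p R_def C_iff)
        moreover have "p = insert_label (\<lambda>A. Some (m A)) (A, W - {Some (m A)})"
          using True by (auto simp: p insert_label_def)
        ultimately show ?thesis by blast
      qed (use that p \<open>None \<in> W\<close> R_def in auto)
    qed
    show "L \<inter> (R \<union> insert_label (\<lambda>A. Some (m A)) ` R) = {}"
      by (auto simp: L_def R_def insert_label_def)
    show "(A', W') \<notin> L" if "(A, W) \<in> R" "A \<subseteq> A'" "W \<subseteq> W'" for A W A' W'
      using that by (auto simp: L_def R_def)
  qed
  moreover have "(\<lambda>(A, W). cone_cell A W) ` L = hom_K2_geom V E"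
    unfolding L_def cone_complex_cells_without_apex[OF V(2)] hom_K2_geom_def hom_K2_cell_eq_cone_cell
    by (simp add: image_image case_prod_beta)
  ultimately show ?thesis by simp
qed

theorem mainTheorem8:
  fixes V :: "'v set" and E :: "('v \<times> 'v) set"
  assumes "finite V" and "E \<subseteq> V \<times> V" and "sym E"
  shows "same_simple_homotopy_type (nbhd_complex_geom V E) (hom_K2_geom V E)"
proof -
  have "collapses (cone_complex V E) (nbhd_complex_geom V E)"
    by (rule cone_complex_collapses_to_nbhd_complex[OF assms(1,2)])
  moreover have "collapses (cone_complex V E) (hom_K2_geom V E)"
    by (rule cone_complex_collapses_to_hom_K2[OF assms(1,2)])
  ultimately show ?thesis by (rule same_simple_homotopy_type_if_collapses)
qed

end
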